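(* Let $A=[A_1,\ldots,A_n]$ be an $n\times n\times n$ ASHM such that $L(A)=1A_1+2A_2+\cdots+nA_n$ is a latin square (each of $1,\ldots,n$ appears exactly once in every row and every column). Then $A$ is a permutation hypermatrix.
   Context: An $n\times n$ alternating sign matrix (ASM) is an $n\times n$ matrix with entries in $\{0,1,-1\}$ such that in every row and column the nonzeros alternate in sign, beginning and ending with $+1$. An $n\times n\times n$ hypermatrix $A=[a_{ijk}]$ is written $A=[A_1,\ldots,A_n]$ with $A_k=[a_{ijk}]_{i,j}$. Its lines are obtained by fixing two of the three indices. $A$ is an alternating sign hypermatrix (ASHM) if all entries lie in $\{0,\pm1\}$ and in every line the nonzeros alternate in sign beginning and ending with $+1$. A permutation hypermatrix is a $(0,1)$-hypermatrix with exactly one $1$ in each line. *)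

theory Defs
  imports Main
begin

definition alt_sign_seq :: "int list \<Rightarrow> bool" where
  "alt_sign_seq xs \<longleftrightarrow>
     set xs \<subseteq> {0, 1, -1} \<and>
     (let ys = filter (\<lambda>x. x \<noteq> 0) xs in
        ys \<noteq> [] \<and> hd ys = 1 \<and> last ys = 1 \<and>
        (\<forall>i. Suc i < length ys \<longrightarrow> ys ! Suc i = - (ys ! i)))"

(* n x n x n hypermatrix: A i j k with indices in {1..n}; A_k = [A i j k]_{i,j}. *)
type_synonym hypermatrix = "nat \<Rightarrow> nat \<Rightarrow> nat \<Rightarrow> int"

definition ASHM :: "nat \<Rightarrow> hypermatrix \<Rightarrow> bool" where
  "ASHM n A \<longleftrightarrow>
     (\<forall>i\<in>{1..n}. \<forall>j\<in>{1..n}. \<forall>k\<in>{1..n}. A i j k \<in> {0, 1, -1}) \<and>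
     (\<forall>j\<in>{1..n}. \<forall>k\<in>{1..n}. alt_sign_seq (map (\<lambda>i. A i j k) [1..<n+1])) \<and>
     (\<forall>i\<in>{1..n}. \<forall>k\<in>{1..n}. alt_sign_seq (map (\<lambda>j. A i j k) [1..<n+1])) \<and>
     (\<forall>i\<in>{1..n}. \<forall>j\<in>{1..n}. alt_sign_seq (map (\<lambda>k. A i j k) [1..<n+1]))"

definition permutation_hypermatrix :: "nat \<Rightarrow> hypermatrix \<Rightarrow> bool" where
  "permutation_hypermatrix n A \<longleftrightarrow>
     (\<forall>i\<in>{1..n}. \<forall>j\<in>{1..n}. \<forall>k\<in>{1..n}. A i j k \<in> {0, 1}) \<and>
     (\<forall>j\<in>{1..n}. \<forall>k\<in>{1..n}. \<exists>!i. i \<in> {1..n} \<and> A i j k = 1) \<and>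
     (\<forall>i\<in>{1..n}. \<forall>k\<in>{1..n}. \<exists>!j. j \<in> {1..n} \<and> A i j k = 1) \<and>
     (\<forall>i\<in>{1..n}. \<forall>j\<in>{1..n}. \<exists>!k. k \<in> {1..n} \<and> A i j k = 1)"

definition Lmat :: "nat \<Rightarrow> hypermatrix \<Rightarrow> nat \<Rightarrow> nat \<Rightarrow> int" where
  "Lmat n A i j = (\<Sum>k=1..n. int k * A i j k)"

definition latin_square :: "nat \<Rightarrow> (nat \<Rightarrow> nat \<Rightarrow> int) \<Rightarrow> bool" where
  "latin_square n M \<longleftrightarrow>
     (\<forall>i\<in>{1..n}. \<forall>v\<in>{1..int n}. \<exists>!j. j \<in> {1..n} \<and> M i j = v) \<and>
     (\<forall>j\<in>{1..n}. \<forall>v\<in>{1..int n}. \<exists>!i. i \<in> {1..n} \<and> M i j = v)"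

end

theory Submission imports Defs begin

(* Fix the first index i and let r j k = A i j k + ... + A i j n be the tail sums of the
   slice along k.  The alternating-sign condition along k puts every r j k into {0, 1};
   along j each column of the slice sums to 1, so column k of r sums to n + 1 - k; and row j
   of r sums to L(A) i j, so by the latin property the row sums are a permutation of 1..n.
   These margins force r j k = [k <= L(A) i j], whence A i j k = [k = L(A) i j] is 0 or 1.
   A 0/1 line summing to 1 has exactly one 1. *)

lemma sum_list_filter_nonzero: "sum_list (filter (\<lambda>x. x \<noteq> 0) xs) = sum_list (xs :: int list)"
  by (induction xs) auto

lemma sum_list_alternating:
  fixes ys :: "int list"
  assumes "successively (\<lambda>x y. y = - x) ys" "set ys \<subseteq> {1, -1}" "ys \<noteq> []" "last ys = 1"
  shows "sum_list ys = of_bool (hd ys = 1)"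
  using assms
proof (induction ys)
  case Nil
  then show ?case by simp
next
  case (Cons x ys)
  show ?case
  proof (cases "ys = []")
    case True
    then show ?thesis using Cons.prems by simp
  next
    case False
    then have "sum_list ys = of_bool (hd ys = 1)" and "hd ys = - x"
      using Cons by (auto simp: successively_Cons)
    moreover have "x = 1 \<or> x = -1" using Cons.prems(2) by auto
    ultimately show ?thesis by auto
  qed
qed

lemma alt_sign_seq_nonzero_part:
  assumes "alt_sign_seq xs"
  defines "ys \<equiv> filter (\<lambda>x. x \<noteq> 0) xs"
  shows "successively (\<lambda>x y. y = - x) ys" "set ys \<subseteq> {1, -1}" "ys \<noteq> []" "hd ys = 1" "last ys = 1"
  using assms unfolding alt_sign_seq_def ys_def Let_def successively_conv_nth by auto

lemma alt_sign_seq_sum: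
  assumes "alt_sign_seq xs"
  shows "sum_list xs = 1"
proof -
  note ys = alt_sign_seq_nonzero_part[OF assms]
  have "sum_list xs = sum_list (filter (\<lambda>x. x \<noteq> 0) xs)" by (simp add: sum_list_filter_nonzero)
  also have "\<dots> = 1" using sum_list_alternating[OF ys(1,2,3,5)] ys(4) by simp
  finally show ?thesis .
qed

lemma alt_sign_seq_suffix_sum:
  assumes "alt_sign_seq xs"
  shows "sum_list (drop m xs) \<in> {0, 1}"
proof -
  define ys where "ys = filter (\<lambda>x. x \<noteq> 0) xs"
  define l where "l = length (filter (\<lambda>x. x \<noteq> 0) (take m xs))"
  have "ys = filter (\<lambda>x. x \<noteq> 0) (take m xs) @ filter (\<lambda>x. x \<noteq> 0) (drop m xs)"
    unfolding ys_def by (metis append_take_drop_id filter_append)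
  then have nonzero_suffix: "filter (\<lambda>x. x \<noteq> 0) (drop m xs) = drop l ys"
    unfolding l_def by simp
  have "sum_list (drop l ys) \<in> {0, 1}" if "drop l ys \<noteq> []"
  proof -
    note ys = alt_sign_seq_nonzero_part[OF assms, folded ys_def]
    have "successively (\<lambda>x y. y = - x) (drop l ys)"
      using ys(1) successively_append_iff[of "\<lambda>x y. y = - x" "take l ys" "drop l ys"]
      unfolding append_take_drop_id by simp
    moreover have "set (drop l ys) \<subseteq> {1, -1}" by (rule subset_trans[OF set_drop_subset ys(2)])
    moreover have "last (drop l ys) = 1" using that ys(5) by (simp add: last_drop)
    ultimately show ?thesis using sum_list_alternating that by simp
  qed
  then have "sum_list (drop l ys) \<in> {0, 1}" by (cases "drop l ys = []") auto
  then show ?thesis using sum_list_filter_nonzero[of "drop m xs"] nonzero_suffix by simp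
qed

lemma sum_atLeastAtMost_conv_sum_list: "(\<Sum>i=a..n. f i) = sum_list (map f [a..<n+1])"
  by (simp only: Suc_eq_plus1[symmetric] atLeastLessThanSuc_atLeastAtMost[symmetric]
      sum_set_upt_conv_sum_list_nat[symmetric] set_upt)

lemma alt_sign_line_sums:
  assumes "alt_sign_seq (map f [1..<n+1])"
  shows "(\<Sum>i=1..n. f i) = 1" and "k \<in> {1..n} \<Longrightarrow> (\<Sum>i=k..n. f i) \<in> {0, 1}"
proof -
  show "(\<Sum>i=1..n. f i) = 1"
    using alt_sign_seq_sum[OF assms] by (simp only: sum_atLeastAtMost_conv_sum_list)
  assume "k \<in> {1..n}"
  then have "drop (k - 1) (map f [1..<n+1]) = map f [k..<n+1]" by (simp add: drop_map)
  then show "(\<Sum>i=k..n. f i) \<in> {0, 1}"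
    using alt_sign_seq_suffix_sum[OF assms, of "k - 1"] by (simp only: sum_atLeastAtMost_conv_sum_list)
qed

lemma sum_tail_sums: "(\<Sum>k=1..n. \<Sum>i=k..n. f i) = (\<Sum>k=1..n. of_nat k * f k)"
proof (induction n)
  case 0
  then show ?case by simp
next
  case (Suc n)
  have "(\<Sum>k=1..Suc n. \<Sum>i=k..Suc n. f i) = (\<Sum>k=1..Suc n. (\<Sum>i=k..n. f i) + f (Suc n))"
    by (rule sum.cong) auto
  also have "\<dots> = (\<Sum>k=1..n. \<Sum>i=k..n. f i) + of_nat (Suc n) * f (Suc n)"
    by (simp add: sum.distrib)
  finally show ?case using Suc by simp
qed

lemma sum_odd_eq_square: "(\<Sum>k=1..m. 2 * int k - 1) = int m ^ 2"
  by (induction m) (auto simp: power2_eq_square algebra_simps)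

lemma sum_odd_times_tail_length: "(\<Sum>k=1..n. (2 * int k - 1) * int (n + 1 - k)) = (\<Sum>v=1..n. int v ^ 2)"
proof (induction n)
  case 0
  then show ?case by simp
next
  case (Suc n)
  have "(\<Sum>k=1..n. (2 * int k - 1) * int (Suc n + 1 - k))
      = (\<Sum>k=1..n. (2 * int k - 1) * int (n + 1 - k) + (2 * int k - 1))"
    by (rule sum.cong) (auto simp: algebra_simps of_nat_diff)
  also have "\<dots> = (\<Sum>v=1..n. int v ^ 2) + int n ^ 2"
    by (simp only: sum.distrib Suc.IH sum_odd_eq_square)
  finally show ?case by (simp add: power2_eq_square algebra_simps)
qed

lemma sum_initial_segment:
  fixes c n :: nat and g :: "nat \<Rightarrow> 'a :: semiring_1"
  assumes "c \<le> n"
  shows "(\<Sum>k=1..n. of_bool (k \<le> c) * g k) = (\<Sum>k=1..c. g k)"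
proof -
  have "(\<Sum>k=1..n. of_bool (k \<le> c) * g k) = (\<Sum>k=1..n. if k \<le> c then g k else 0)"
    by (rule sum.cong) auto
  also have "\<dots> = sum g {k\<in>{1..n}. k \<le> c}" by (rule sum.inter_filter[symmetric]) simp
  also have "{k\<in>{1..n}. k \<le> c} = {1..c}" using assms by auto
  finally show ?thesis .
qed

lemma staircase_deviation_nonneg:
  fixes r :: int and k c :: nat
  assumes "r \<in> {0, 1}"
  shows "0 \<le> (r - of_bool (k \<le> c)) * (2 * int k - 2 * int c - 1)"
  using assms by (cases "k \<le> c") auto

lemma staircase_deviation_eq_0_iff:
  fixes r :: int and k c :: nat
  shows "(r - of_bool (k \<le> c)) * (2 * int k - 2 * int c - 1) = 0 \<longleftrightarrow> r = of_bool (k \<le> c)"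
proof -
  have "2 * int k - 2 * int c - 1 \<noteq> 0" by presburger
  then show ?thesis by simp
qed

lemma staircase_deviation_sum:
  fixes r :: "nat \<Rightarrow> int"
  assumes "c \<le> n" "(\<Sum>k=1..n. r k) = int c"
  shows "(\<Sum>k=1..n. (r k - of_bool (k \<le> c)) * (2 * int k - 2 * int c - 1))
       = (\<Sum>k=1..n. r k * (2 * int k - 1)) - int c ^ 2"
proof -
  define s :: "nat \<Rightarrow> int" where "s k = of_bool (k \<le> c)" for k
  have s_sum: "(\<Sum>k=1..n. s k) = int c"
    using sum_initial_segment[OF assms(1), of "\<lambda>_. 1 :: int"] unfolding s_def by simp
  have s_odd_sum: "(\<Sum>k=1..n. s k * (2 * int k - 1)) = int c ^ 2"
    unfolding s_def by (simp only: sum_initial_segment[OF assms(1)] sum_odd_eq_square)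
  have "(\<Sum>k=1..n. (r k - s k) * (2 * int k - 2 * int c - 1))
      = (\<Sum>k=1..n. r k * (2 * int k - 1) - 2 * int c * r k - s k * (2 * int k - 1) + 2 * int c * s k)"
    by (rule sum.cong) (simp_all add: algebra_simps)
  also have "\<dots> = (\<Sum>k=1..n. r k * (2 * int k - 1)) - 2 * int c * (\<Sum>k=1..n. r k)
        - (\<Sum>k=1..n. s k * (2 * int k - 1)) + 2 * int c * (\<Sum>k=1..n. s k)"
    by (simp only: sum.distrib sum_subtractf sum_distrib_left)
  also have "\<dots> = (\<Sum>k=1..n. r k * (2 * int k - 1)) - int c ^ 2"
    by (simp only: assms(2) s_sum s_odd_sum)
  finally show ?thesis unfolding s_def .
qed

lemma zero_one_matrix_eq_staircase:
  fixes r :: "nat \<Rightarrow> nat \<Rightarrow> int" and c :: "nat \<Rightarrow> nat"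
  assumes r01: "\<And>j k. j \<in> {1..n} \<Longrightarrow> k \<in> {1..n} \<Longrightarrow> r j k \<in> {0, 1}"
    and col: "\<And>k. k \<in> {1..n} \<Longrightarrow> (\<Sum>j=1..n. r j k) = int (n + 1 - k)"
    and row: "\<And>j. j \<in> {1..n} \<Longrightarrow> (\<Sum>k=1..n. r j k) = int (c j)"
    and c: "bij_betw c {1..n} {1..n}"
    and jk: "j \<in> {1..n}" "k \<in> {1..n}"
  shows "r j k = of_bool (k \<le> c j)"
proof -
  \<comment> \<open>The weight 2k - 2c - 1 is positive exactly where the staircase entry is 0, so every D j k
     is nonnegative; the margins make the total of D equal to zero.\<close>
  define D where "D j k = (r j k - of_bool (k \<le> c j)) * (2 * int k - 2 * int (c j) - 1)" for j k
  have D_nonneg: "0 \<le> D j k" if "j \<in> {1..n}" "k \<in> {1..n}" for j k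
    unfolding D_def using r01[OF that] by (rule staircase_deviation_nonneg)
  have c_le: "c j \<le> n" if "j \<in> {1..n}" for j
    using c that by (auto dest: bij_betwE)
  have weighted_sum_swap: "(\<Sum>j=1..n. \<Sum>k=1..n. r j k * (2 * int k - 1))
      = (\<Sum>k=1..n. (2 * int k - 1) * (\<Sum>j=1..n. r j k))"
    by (subst sum.swap) (simp add: sum_distrib_left mult.commute)
  have column_sums: "(\<Sum>k=1..n. (2 * int k - 1) * (\<Sum>j=1..n. r j k))
      = (\<Sum>k=1..n. (2 * int k - 1) * int (n + 1 - k))"
    by (rule sum.cong[OF refl]) (simp only: col)
  have squares: "(\<Sum>j=1..n. int (c j) ^ 2) = (\<Sum>v=1..n. int v ^ 2)"
    by (rule sum.reindex_bij_betw[OF c])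
  have "(\<Sum>j=1..n. \<Sum>k=1..n. D j k) = (\<Sum>j=1..n. (\<Sum>k=1..n. r j k * (2 * int k - 1)) - int (c j) ^ 2)"
    unfolding D_def by (rule sum.cong[OF refl]) (rule staircase_deviation_sum[OF c_le row])
  also have "\<dots> = (\<Sum>k=1..n. (2 * int k - 1) * (\<Sum>j=1..n. r j k)) - (\<Sum>j=1..n. int (c j) ^ 2)"
    by (simp only: sum_subtractf weighted_sum_swap)
  also have "\<dots> = (\<Sum>k=1..n. (2 * int k - 1) * int (n + 1 - k)) - (\<Sum>v=1..n. int v ^ 2)"
    by (simp only: column_sums squares)
  also have "\<dots> = 0" by (simp only: sum_odd_times_tail_length diff_self)
  finally have "(\<Sum>j=1..n. \<Sum>k=1..n. D j k) = 0" .
  moreover have "0 \<le> (\<Sum>k=1..n. D j' k)" if "j' \<in> {1..n}" for j'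
    using D_nonneg[OF that] by (rule sum_nonneg)
  ultimately have "(\<Sum>k=1..n. D j k) = 0"
    using jk(1) by (intro sum_nonneg_0[where f = "\<lambda>j. \<Sum>k=1..n. D j k"]) auto
  then have "D j k = 0"
    using jk by (intro sum_nonneg_0[where f = "D j"]) (auto intro: D_nonneg)
  then show ?thesis unfolding D_def by (simp only: staircase_deviation_eq_0_iff)
qed

lemma ex1_eq_1_if_sum_eq_1:
  fixes f :: "'a \<Rightarrow> int"
  assumes "finite S" "\<And>x. x \<in> S \<Longrightarrow> f x \<in> {0, 1}" "sum f S = 1"
  shows "\<exists>!x. x \<in> S \<and> f x = 1"
proof -
  have "\<exists>x. x \<in> S \<and> f x = 1"
  proof (rule ccontr)
    assume "\<nexists>x. x \<in> S \<and> f x = 1"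
    then have "sum f S = 0" using assms(2) by (intro sum.neutral) fastforce
    then show False using assms(3) by simp
  qed
  moreover have "x = y" if "x \<in> S" "f x = 1" "y \<in> S" "f y = 1" for x y
  proof (rule ccontr)
    assume "x \<noteq> y"
    then have "sum f {x, y} = 2" using that by simp
    moreover have "sum f {x, y} \<le> sum f S"
      by (rule sum_mono2) (use that in \<open>auto dest: assms(2) simp: assms(1)\<close>)
    ultimately show False using assms(3) by simp
  qed
  ultimately show ?thesis by blast
qed

lemma slice_eq_indicator:
  fixes M :: "nat \<Rightarrow> nat \<Rightarrow> int" and c :: "nat \<Rightarrow> nat"
  assumes tails: "\<And>j k. j \<in> {1..n} \<Longrightarrow> k \<in> {1..n} \<Longrightarrow> (\<Sum>i=k..n. M j i) \<in> {0, 1}"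
    and cols: "\<And>k. k \<in> {1..n} \<Longrightarrow> (\<Sum>j=1..n. M j k) = 1"
    and rows: "\<And>j. j \<in> {1..n} \<Longrightarrow> (\<Sum>k=1..n. int k * M j k) = int (c j)"
    and c: "bij_betw c {1..n} {1..n}"
    and jk: "j \<in> {1..n}" "k \<in> {1..n}"
  shows "M j k = of_bool (k = c j)"
proof -
  define r where "r j k = (\<Sum>i=k..n. M j i)" for j k
  have col: "(\<Sum>j=1..n. r j k) = int (n + 1 - k)" if "k \<in> {1..n}" for k
  proof -
    have "(\<Sum>j=1..n. r j k) = (\<Sum>i=k..n. \<Sum>j=1..n. M j i)" unfolding r_def by (rule sum.swap)
    also have "\<dots> = (\<Sum>i=k..n. 1)" using that by (intro sum.cong refl cols) auto
    finally show ?thesis by simp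
  qed
  have row: "(\<Sum>k=1..n. r j k) = int (c j)" if "j \<in> {1..n}" for j
    unfolding r_def using sum_tail_sums[where f = "M j"] rows[OF that] by simp
  have r01: "r j' i \<in> {0, 1}" if "j' \<in> {1..n}" "i \<in> {1..n}" for j' i
    unfolding r_def using that by (rule tails)
  have staircase: "r j i = of_bool (i \<le> c j)" if "i \<in> {1..n}" for i
    by (rule zero_one_matrix_eq_staircase[OF r01 col row c jk(1) that])
  have next_tail: "r j (Suc k) = of_bool (Suc k \<le> c j)"
  proof (cases "k = n")
    case True
    moreover have "c j \<le> n" using c jk(1) by (auto dest: bij_betwE)
    ultimately show ?thesis by (simp add: r_def)
  next
    case False
    then show ?thesis using jk(2) staircase[of "Suc k"] by simp
  qed
  have "M j k = r j k - r j (Suc k)"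
    unfolding r_def using jk(2) by (simp add: sum.atLeast_Suc_atMost)
  then show ?thesis using staircase[OF jk(2)] next_tail by auto
qed

lemma ASHM_lines:
  assumes "ASHM n A"
  shows "j \<in> {1..n} \<Longrightarrow> k \<in> {1..n} \<Longrightarrow> alt_sign_seq (map (\<lambda>i. A i j k) [1..<n+1])"
    and "i \<in> {1..n} \<Longrightarrow> k \<in> {1..n} \<Longrightarrow> alt_sign_seq (map (\<lambda>j. A i j k) [1..<n+1])"
    and "i \<in> {1..n} \<Longrightarrow> j \<in> {1..n} \<Longrightarrow> alt_sign_seq (map (\<lambda>k. A i j k) [1..<n+1])"
  using assms unfolding ASHM_def by simp_all

lemma bij_betw_if_surj_on_finite:
  assumes "finite S" "S \<subseteq> f ` S"
  shows "bij_betw f S S"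
proof -
  have "f ` S = S"
    by (rule card_seteq[symmetric]) (use assms card_image_le in auto)
  then show ?thesis using finite_surj_inj[OF assms] by (simp add: bij_betw_def)
qed

lemma latin_square_row_bij:
  assumes "latin_square n M" "i \<in> {1..n}"
  shows "bij_betw (\<lambda>j. nat (M i j)) {1..n} {1..n}"
proof (rule bij_betw_if_surj_on_finite[OF finite_atLeastAtMost], rule subsetI)
  fix v assume "v \<in> {1..n}"
  then have "int v \<in> {1..int n}" by auto
  then have "\<exists>!j. j \<in> {1..n} \<and> M i j = int v"
    using assms unfolding latin_square_def by blast
  then obtain j where "j \<in> {1..n}" "M i j = int v" by blast
  then show "v \<in> (\<lambda>j. nat (M i j)) ` {1..n}" by (intro rev_image_eqI[of j]) simp_all
qed

lemma ASHM_slice_eq_indicator: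
  assumes "ASHM n A" "latin_square n (Lmat n A)"
    and i: "i \<in> {1..n}" and j: "j \<in> {1..n}" and k: "k \<in> {1..n}"
  shows "A i j k = of_bool (int k = Lmat n A i j)"
proof -
  define c where "c j = nat (Lmat n A i j)" for j
  have c_bij: "bij_betw c {1..n} {1..n}"
    unfolding c_def using assms(2) i by (rule latin_square_row_bij)
  have Lmat_eq: "Lmat n A i j' = int (c j')" if "j' \<in> {1..n}" for j'
  proof -
    have "c j' \<in> {1..n}" using c_bij that by (auto dest: bij_betwE)
    then show ?thesis unfolding c_def by (cases "Lmat n A i j' \<ge> 0") auto
  qed
  have "A i j k = of_bool (k = c j)"
  proof (rule slice_eq_indicator[OF _ _ _ c_bij j k])
    show "(\<Sum>k'=k..n. A i j' k') \<in> {0, 1}" if "j' \<in> {1..n}" "k \<in> {1..n}" for j' k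
      using alt_sign_line_sums(2)[OF ASHM_lines(3)[OF assms(1) i that(1)] that(2)] .
    show "(\<Sum>j'=1..n. A i j' k) = 1" if "k \<in> {1..n}" for k
      using alt_sign_line_sums(1)[OF ASHM_lines(2)[OF assms(1) i that]] .
    show "(\<Sum>k=1..n. int k * A i j' k) = int (c j')" if "j' \<in> {1..n}" for j'
      using Lmat_eq[OF that] unfolding Lmat_def .
  qed
  then show ?thesis using Lmat_eq[OF j] by simp
qed

theorem mainTheorem4:
  fixes n :: nat and A :: hypermatrix
  assumes "ASHM n A"
    and "latin_square n (Lmat n A)"
  shows "permutation_hypermatrix n A"
proof -
  note lines = ASHM_lines[OF assms(1)]
  have entries: "A i j k \<in> {0, 1}" if "i \<in> {1..n}" "j \<in> {1..n}" "k \<in> {1..n}" for i j k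
    using ASHM_slice_eq_indicator[OF assms that] by simp
  show ?thesis unfolding permutation_hypermatrix_def
  proof (intro conjI ballI)
    show "A i j k \<in> {0, 1}" if "i \<in> {1..n}" "j \<in> {1..n}" "k \<in> {1..n}" for i j k
      using that by (rule entries)
    show "\<exists>!i. i \<in> {1..n} \<and> A i j k = 1" if "j \<in> {1..n}" "k \<in> {1..n}" for j k
      by (rule ex1_eq_1_if_sum_eq_1)
        (use that entries alt_sign_line_sums(1)[OF lines(1)[OF that]] in auto)
    show "\<exists>!j. j \<in> {1..n} \<and> A i j k = 1" if "i \<in> {1..n}" "k \<in> {1..n}" for i k
      by (rule ex1_eq_1_if_sum_eq_1)
        (use that entries alt_sign_line_sums(1)[OF lines(2)[OF that]] in auto)
    show "\<exists>!k. k \<in> {1..n} \<and> A i j k = 1" if "i \<in> {1..n}" "j \<in> {1..n}" for i j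
      by (rule ex1_eq_1_if_sum_eq_1)
        (use that entries alt_sign_line_sums(1)[OF lines(3)[OF that]] in auto)
  qed
qed

end
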